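(* Let $N\ge2$, $V_{th}>0$, and consider a multi-layer feedback spiking neural network with discrete integrate-and-fire neurons organized in layers $l=1,\dots,N$, with weight matrices $\mathbf{F}^1$ (input to layer 1), $\mathbf{F}^{l}$ (layer $l-1$ to layer $l$, $l=2,\dots,N$), feedback matrix $\mathbf{W}^1$ (layer $N$ to layer 1), and biases $\mathbf{b}^l$. With $\mathbf{u}^l[0]=\mathbf{0}$, $\mathbf{s}^l[0]=\mathbf{0}$, the dynamics are $$\mathbf{u}^1[t+1]=\mathbf{u}^1[t]+\mathbf{W}^1\mathbf{s}^N[t]+\mathbf{F}^1\mathbf{x}[t]+\mathbf{b}^1-V_{th}\mathbf{s}^1[t+1],$$ $$\mathbf{u}^{l+1}[t+1]=\mathbf{u}^{l+1}[t]+\mathbf{F}^{l+1}\mathbf{s}^l[t+1]+\mathbf{b}^{l+1}-V_{th}\mathbf{s}^{l+1}[t+1],\quad l=1,\dots,N-1,$$ where each spike $\mathbf{s}^l[t+1]$ equals $H(\text{pre-reset potential}-V_{th})$ elementwise ($H$ the Heaviside step). Define $\mathbf{a}^l[t]=\frac1t\sum_{\tau=1}^t\mathbf{s}^l[\tau]$ and $\overline{\mathbf{x}}[t]=\frac1{t+1}\sum_{\tau=0}^t\mathbf{x}[\tau]$, and let ${\mathbf{u}^l}^+[t]$ denote the parts of the membrane potentials for which $$\mathbf{a}^1[t+1]=\sigma\!\left(\tfrac1{V_{th}}\left(\tfrac{t}{t+1}\mathbf{W}^1\mathbf{a}^N[t]+\mathbf{F}^1\overline{\mathbf{x}}[t]+\mathbf{b}^1-\tfrac{{\mathbf{u}^1}^+[t+1]}{t+1}\right)\right),$$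 $$\mathbf{a}^{l+1}[t+1]=\sigma\!\left(\tfrac1{V_{th}}\left(\mathbf{F}^{l+1}\mathbf{a}^l[t+1]+\mathbf{b}^{l+1}-\tfrac{{\mathbf{u}^{l+1}}^+[t+1]}{t+1}\right)\right),\ l=1,\dots,N-1,$$ hold. Suppose $\overline{\mathbf{x}}[t]\to\mathbf{x}^*$, and there exist constants $c$ and $\gamma<1$ such that $|{\mathbf{u}^l_i}^+[t]|\le c$ for all $i,l,t$ and $\|\mathbf{W}^1\|_2\|\mathbf{F}^N\|_2\cdots\|\mathbf{F}^2\|_2\le\gamma V_{th}^N$. Then $\mathbf{a}^l[t]\to{\mathbf{a}^l}^*$ for every $l$, where ${\mathbf{a}^1}^*=f_1\big(f_N\circ\cdots\circ f_2({\mathbf{a}^1}^* ),\mathbf{x}^*\big)$ and ${\mathbf{a}^{l+1}}^*=f_{l+1}({\mathbf{a}^l}^* )$, with $f_1(\mathbf{a},\mathbf{x})=\sigma\big(\frac1{V_{th}}(\mathbf{W}^1\mathbf{a}+\mathbf{F}^1\mathbf{x}+\mathbf{b}^1)\big)$ and $f_l(\mathbf{a})=\sigma\big(\frac1{V_{th}}(\mathbf{F}^l\mathbf{a}+\mathbf{b}^l)\big)$ for $l\ge2$.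
   Context: $\sigma$ is applied elementwise with $\sigma(x)=1$ for $x>1$, $\sigma(x)=x$ for $0\le x\le1$, $\sigma(x)=0$ for $x<0$. $\|\cdot\|_2$ is the spectral norm. In the paper each membrane potential is decomposed as $\mathbf{u}^l_i[t]={\mathbf{u}^l_i}^-[t]+{\mathbf{u}^l_i}^+[t]$, the first term collecting the accumulated negative and excess positive terms (those clipped by $\sigma$), and ${\mathbf{u}^l}^+[t]$ being the remainder, so that the displayed relations hold. *)

theory Defs
  imports "HOL-Analysis.Analysis"
begin

text \<open>Vectors are functions nat => real (only indices below the dimension matter);
 a p x q matrix is a function nat => nat => real with entries A i j, i < p, j < q.\<close>

definition sigma :: "real \<Rightarrow> real" where
  "sigma x = (if x > 1 then 1 else if x < 0 then 0 else x)"

definition heaviside :: "real \<Rightarrow> real" where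
  "heaviside x = (if x \<ge> 0 then 1 else 0)"

definition mat_vec :: "nat \<Rightarrow> (nat \<Rightarrow> nat \<Rightarrow> real) \<Rightarrow> (nat \<Rightarrow> real) \<Rightarrow> nat \<Rightarrow> real" where
  "mat_vec q A v = (\<lambda>i. \<Sum>j<q. A i j * v j)"

definition spec_norm :: "nat \<Rightarrow> nat \<Rightarrow> (nat \<Rightarrow> nat \<Rightarrow> real) \<Rightarrow> real" where
  "spec_norm p q A = Sup {sqrt (\<Sum>i<p. (mat_vec q A v i)\<^sup>2) | v. (\<Sum>j<q. (v j)\<^sup>2) \<le> 1}"

definition avg_rate :: "(nat \<Rightarrow> nat \<Rightarrow> nat \<Rightarrow> real) \<Rightarrow> nat \<Rightarrow> nat \<Rightarrow> nat \<Rightarrow> real" where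
  "avg_rate s l t i = (1 / real t) * (\<Sum>\<tau>\<in>{1..t}. s l i \<tau>)"

definition avg_input :: "(nat \<Rightarrow> nat \<Rightarrow> real) \<Rightarrow> nat \<Rightarrow> nat \<Rightarrow> real" where
  "avg_input x t j = (1 / real (t + 1)) * (\<Sum>\<tau>\<le>t. x \<tau> j)"

definition f_first :: "real \<Rightarrow> (nat \<Rightarrow> nat) \<Rightarrow> nat \<Rightarrow> nat \<Rightarrow> (nat \<Rightarrow> nat \<Rightarrow> real)
   \<Rightarrow> (nat \<Rightarrow> nat \<Rightarrow> nat \<Rightarrow> real) \<Rightarrow> (nat \<Rightarrow> nat \<Rightarrow> real)
   \<Rightarrow> (nat \<Rightarrow> real) \<Rightarrow> (nat \<Rightarrow> real) \<Rightarrow> nat \<Rightarrow> real" where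
  "f_first Vth n m N W F b a x = (\<lambda>i. sigma ((1 / Vth) *
      (mat_vec (n N) W a i + mat_vec m (F 1) x i + b 1 i)))"

definition f_layer :: "real \<Rightarrow> (nat \<Rightarrow> nat) \<Rightarrow> (nat \<Rightarrow> nat \<Rightarrow> nat \<Rightarrow> real)
   \<Rightarrow> (nat \<Rightarrow> nat \<Rightarrow> real) \<Rightarrow> nat \<Rightarrow> (nat \<Rightarrow> real) \<Rightarrow> nat \<Rightarrow> real" where
  "f_layer Vth n F b l a = (\<lambda>i. sigma ((1 / Vth) * (mat_vec (n (l - 1)) (F l) a i + b l i)))"

fun f_chain :: "real \<Rightarrow> (nat \<Rightarrow> nat) \<Rightarrow> (nat \<Rightarrow> nat \<Rightarrow> nat \<Rightarrow> real)
   \<Rightarrow> (nat \<Rightarrow> nat \<Rightarrow> real) \<Rightarrow> nat \<Rightarrow> (nat \<Rightarrow> real) \<Rightarrow> nat \<Rightarrow> real" where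
  "f_chain Vth n F b 0 a = a"
| "f_chain Vth n F b (Suc 0) a = a"
| "f_chain Vth n F b (Suc (Suc k)) a = f_layer Vth n F b (Suc (Suc k)) (f_chain Vth n F b (Suc k) a)"

end

theory Submission
  imports Defs
begin

text \<open>
  Since \<open>sigma\<close> is 1-Lipschitz, each layer map \<open>f_l\<close> is Lipschitz in the Euclidean norm with
  constant \<open>\<parallel>F^l\<parallel>\<^sub>2 / V_th\<close>, so the loop map \<open>a \<mapsto> f_1 (f_N (\<dots> (f_2 a)), x*)\<close> is a contraction
  with constant \<open>\<parallel>W^1\<parallel>\<^sub>2 \<parallel>F^N\<parallel>\<^sub>2 \<cdots> \<parallel>F^2\<parallel>\<^sub>2 / V_th^N \<le> \<gamma> < 1\<close> and has a fixed point
  \<open>a^1*\<close> by Banach's theorem. The rate relations say that the network applies the same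
  maps to its average rates, up to errors of order \<open>1/t\<close> (from the bounded \<open>u^+\<close> and from the
  factor \<open>t/(t+1)\<close>) plus the input error \<open>|xbar[t] - x*|\<close>. Hence the distance \<open>E_t\<close> of \<open>a^1[t+1]\<close>
  from \<open>a^1*\<close> satisfies \<open>E_(t+1) \<le> \<gamma> E_t + D_t\<close> with \<open>D_t \<longrightarrow> 0\<close>, so \<open>E_t \<longrightarrow> 0\<close>, and the
  deeper layers converge by Lipschitz continuity of \<open>f_l \<circ> \<dots> \<circ> f_2\<close>.
\<close>

lemma sigma_lipschitz: "\<bar>sigma x - sigma y\<bar> \<le> \<bar>x - y\<bar>"
  by (simp add: sigma_def)

lemma sigma_bounds: "0 \<le> sigma x" "sigma x \<le> 1"
  by (auto simp: sigma_def)

lemma L2_set_abs: "L2_set (\<lambda>i. \<bar>f i\<bar>) A = L2_set f A"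
  by (simp add: L2_set_def)

lemma abs_le_L2_set: "finite A \<Longrightarrow> i \<in> A \<Longrightarrow> \<bar>f i\<bar> \<le> L2_set f A"
  using member_le_L2_set[of A i "\<lambda>i. \<bar>f i\<bar>"] by (simp add: L2_set_abs)

lemma L2_set_mono_abs:
  "(\<And>i. i \<in> A \<Longrightarrow> \<bar>f i\<bar> \<le> \<bar>g i\<bar>) \<Longrightarrow> L2_set f A \<le> L2_set g A"
  using L2_set_mono[of A "\<lambda>i. \<bar>f i\<bar>" "\<lambda>i. \<bar>g i\<bar>"] by (simp add: L2_set_abs)

lemma L2_set_lessThan_le:
  assumes "\<And>i. i < k \<Longrightarrow> \<bar>f i\<bar> \<le> M"
  shows "L2_set f {..<k} \<le> real k * M"
proof -
  have "L2_set f {..<k} \<le> (\<Sum>i<k. \<bar>f i\<bar>)" by (rule L2_set_le_sum_abs)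
  also have "\<dots> \<le> (\<Sum>i<k. M)" by (rule sum_mono) (use assms in auto)
  finally show ?thesis by simp
qed

section \<open>Euclidean distance of the leading coordinates\<close>

definition L2_dist :: "nat \<Rightarrow> (nat \<Rightarrow> real) \<Rightarrow> (nat \<Rightarrow> real) \<Rightarrow> real" where
  "L2_dist k u v = L2_set (\<lambda>i. u i - v i) {..<k}"

lemma L2_dist_nonneg: "0 \<le> L2_dist k u v"
  by (simp add: L2_dist_def)

lemma L2_dist_commute: "L2_dist k u v = L2_dist k v u"
  unfolding L2_dist_def L2_set_def by (simp add: power2_commute)

lemma L2_dist_triangle: "L2_dist k u w \<le> L2_dist k u v + L2_dist k v w"
proof -
  have "L2_dist k u w = L2_set (\<lambda>i. (u i - v i) + (v i - w i)) {..<k}"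
    by (simp add: L2_dist_def)
  also have "\<dots> \<le> L2_dist k u v + L2_dist k v w"
    unfolding L2_dist_def by (rule L2_set_triangle_ineq)
  finally show ?thesis .
qed

lemma L2_dist_cong:
  "(\<And>i. i < k \<Longrightarrow> u i = u' i) \<Longrightarrow> (\<And>i. i < k \<Longrightarrow> v i = v' i)
    \<Longrightarrow> L2_dist k u v = L2_dist k u' v'"
  unfolding L2_dist_def by (intro L2_set_cong) auto

lemma abs_diff_le_L2_dist: "i < k \<Longrightarrow> \<bar>u i - v i\<bar> \<le> L2_dist k u v"
  unfolding L2_dist_def by (rule abs_le_L2_set[where f = "\<lambda>i. u i - v i"]) auto

lemma L2_dist_tendsto_0_iff:
  "(\<lambda>t. L2_dist k (u t) v) \<longlonglongrightarrow> 0 \<longleftrightarrow> (\<forall>i<k. (\<lambda>t. u t i) \<longlonglongrightarrow> v i)"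
proof
  assume lim: "(\<lambda>t. L2_dist k (u t) v) \<longlonglongrightarrow> 0"
  show "\<forall>i<k. (\<lambda>t. u t i) \<longlonglongrightarrow> v i"
  proof (intro allI impI)
    fix i assume "i < k"
    then have "(\<lambda>t. u t i - v i) \<longlonglongrightarrow> 0"
      by (intro Lim_null_comparison[OF _ lim] always_eventually allI)
        (simp add: abs_diff_le_L2_dist)
    then show "(\<lambda>t. u t i) \<longlonglongrightarrow> v i" by (simp add: LIM_zero_iff)
  qed
next
  assume "\<forall>i<k. (\<lambda>t. u t i) \<longlonglongrightarrow> v i"
  then have "(\<lambda>t. sqrt (\<Sum>i<k. (u t i - v i)\<^sup>2)) \<longlonglongrightarrow> sqrt (\<Sum>i<k. (v i - v i)\<^sup>2)"
    by (intro tendsto_intros) auto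
  then show "(\<lambda>t. L2_dist k (u t) v) \<longlonglongrightarrow> 0"
    by (simp add: L2_dist_def L2_set_def)
qed

lemma L2_dist_sigma_le:
  assumes "0 \<le> c"
  shows "L2_dist p (\<lambda>i. sigma (c * X i)) (\<lambda>i. sigma (c * Y i)) \<le> c * L2_dist p X Y"
proof -
  have "L2_dist p (\<lambda>i. sigma (c * X i)) (\<lambda>i. sigma (c * Y i)) \<le> L2_set (\<lambda>i. c * (X i - Y i)) {..<p}"
    unfolding L2_dist_def using sigma_lipschitz
    by (intro L2_set_mono_abs) (simp add: right_diff_distrib)
  then show ?thesis
    using assms by (simp add: L2_dist_def L2_set_right_distrib)
qed

lemma L2_dist_sigma_perturb_le:
  assumes "0 \<le> c"
  shows "L2_dist p (\<lambda>i. sigma (c * (X i - w i))) (\<lambda>i. sigma (c * X i)) \<le> c * L2_set w {..<p}"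
  using L2_dist_sigma_le[OF assms, of p "\<lambda>i. X i - w i" X] by (simp add: L2_dist_def L2_set_def)

lemma Metric_space_L2_dist: "Metric_space {v. \<forall>j\<ge>k. v j = 0} (L2_dist k)"
proof
  fix u v w :: "nat \<Rightarrow> real"
  show "0 \<le> L2_dist k u v" by (rule L2_dist_nonneg)
  show "L2_dist k u v = L2_dist k v u" by (rule L2_dist_commute)
  show "L2_dist k u w \<le> L2_dist k u v + L2_dist k v w" by (rule L2_dist_triangle)
  assume "u \<in> {v. \<forall>j\<ge>k. v j = 0}" "v \<in> {v. \<forall>j\<ge>k. v j = 0}"
  then show "L2_dist k u v = 0 \<longleftrightarrow> u = v"
    unfolding L2_dist_def by (auto simp: L2_set_eq_0_iff intro!: ext) (metis lessThan_iff not_le)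
qed

lemma mcomplete_L2_dist: "Metric_space.mcomplete {v. \<forall>j\<ge>k. v j = 0} (L2_dist k)"
proof -
  interpret Metric_space "{v. \<forall>j\<ge>k. v j = 0}" "L2_dist k" by (rule Metric_space_L2_dist)
  show ?thesis unfolding mcomplete_def
  proof (intro allI impI)
    fix \<sigma> assume C: "MCauchy \<sigma>"
    define a where "a i = (if i < k then lim (\<lambda>t. \<sigma> t i) else 0)" for i
    have "Cauchy (\<lambda>t. \<sigma> t i)" if "i < k" for i
    proof (rule metric_CauchyI)
      fix e :: real assume "e > 0"
      then obtain M where M: "\<And>t t'. M \<le> t \<Longrightarrow> M \<le> t' \<Longrightarrow> L2_dist k (\<sigma> t) (\<sigma> t') < e"
        using C unfolding MCauchy_def by blast
      show "\<exists>M. \<forall>t\<ge>M. \<forall>t'\<ge>M. dist (\<sigma> t i) (\<sigma> t' i) < e"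
      proof (intro exI allI impI)
        fix t t' assume "M \<le> t" "M \<le> t'"
        then have "L2_dist k (\<sigma> t) (\<sigma> t') < e" by (rule M)
        then show "dist (\<sigma> t i) (\<sigma> t' i) < e"
          using abs_diff_le_L2_dist[OF that, of "\<sigma> t" "\<sigma> t'"] by (simp add: dist_real_def)
      qed
    qed
    then have lim: "(\<lambda>t. \<sigma> t i) \<longlonglongrightarrow> a i" if "i < k" for i
      using that unfolding a_def by (simp add: Cauchy_convergent_iff convergent_LIMSEQ_iff)
    have "(\<lambda>t. L2_dist k (\<sigma> t) a) \<longlonglongrightarrow> 0"
      using lim by (simp add: L2_dist_tendsto_0_iff)
    moreover have "\<sigma> t \<in> {v. \<forall>j\<ge>k. v j = 0}" for t
      using C unfolding MCauchy_def by auto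
    ultimately have "limitin mtopology \<sigma> a sequentially"
      unfolding limitin_metric_dist_null by (simp add: a_def always_eventually)
    then show "\<exists>a. limitin mtopology \<sigma> a sequentially" by blast
  qed
qed

lemma L2_dist_contraction_has_fixpoint:
  assumes "\<rho> < 1" and contr: "\<And>u v. L2_dist k (T u) (T v) \<le> \<rho> * L2_dist k u v"
    and supp: "\<And>u j. k \<le> j \<Longrightarrow> T u j = 0"
  shows "\<exists>a. T a = a"
proof -
  interpret Metric_space "{v. \<forall>j\<ge>k. v j = 0}" "L2_dist k" by (rule Metric_space_L2_dist)
  have "(\<lambda>_. 0) \<in> {v. \<forall>j\<ge>k. v j = (0::real)}" by simp
  then have "{v. \<forall>j\<ge>k. v j = (0::real)} \<noteq> {}" by blast
  moreover have "T \<in> {v. \<forall>j\<ge>k. v j = 0} \<rightarrow> {v. \<forall>j\<ge>k. v j = 0}" using supp by auto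
  ultimately obtain a where "T a = a"
    by (rule Banach_fixedpoint_thm[OF mcomplete_L2_dist _ _ \<open>\<rho> < 1\<close>]) (auto intro: contr)
  then show ?thesis by blast
qed

section \<open>Perturbed contractive recurrences\<close>

lemma inverse_Suc_LIMSEQ_0: "(\<lambda>t. K / (real t + 1)) \<longlonglongrightarrow> 0"
proof -
  have "(\<lambda>t. K * inverse (real (Suc t))) \<longlonglongrightarrow> K * 0"
    by (intro tendsto_intros LIMSEQ_inverse_real_of_nat)
  then show ?thesis by (simp add: divide_inverse add.commute)
qed

lemma contracting_recurrence_LIMSEQ_0:
  fixes E D :: "nat \<Rightarrow> real"
  assumes E0: "\<And>t. 0 \<le> E t" and \<rho>: "0 \<le> \<rho>" "\<rho> < 1" and D: "D \<longlonglongrightarrow> 0"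
    and rec: "\<And>t. E (Suc t) \<le> \<rho> * E t + D t"
  shows "E \<longlonglongrightarrow> 0"
proof (rule LIMSEQ_I)
  fix r :: real assume r: "0 < r"
  obtain T where T: "\<And>t. T \<le> t \<Longrightarrow> \<bar>D t\<bar> < r * (1 - \<rho>) / 2"
    using LIMSEQ_D[OF D, of "r * (1 - \<rho>) / 2"] r \<rho> by auto
  have decay: "E (T + k) \<le> \<rho> ^ k * E T + r / 2" for k
  proof (induction k)
    case 0
    then show ?case using r by simp
  next
    case (Suc k)
    have "E (T + Suc k) \<le> \<rho> * E (T + k) + D (T + k)"
      using rec[of "T + k"] by simp
    also have "\<dots> \<le> \<rho> * (\<rho> ^ k * E T + r / 2) + r * (1 - \<rho>) / 2"
      using T[of "T + k"] mult_left_mono[OF Suc.IH \<rho>(1)] by auto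
    also have "\<dots> = \<rho> ^ Suc k * E T + r / 2"
      by (simp add: field_simps)
    finally show ?case .
  qed
  have "(\<lambda>k. \<rho> ^ k * E T) \<longlonglongrightarrow> 0 * E T"
    using \<rho> by (intro tendsto_intros) simp
  then obtain K where K: "\<And>k. K \<le> k \<Longrightarrow> \<bar>\<rho> ^ k * E T\<bar> < r / 2"
    using LIMSEQ_D[of "\<lambda>k. \<rho> ^ k * E T" 0 "r / 2"] r by auto
  show "\<exists>t0. \<forall>t\<ge>t0. norm (E t - 0) < r"
  proof (intro exI allI impI)
    fix t assume "T + K \<le> t"
    then have t: "T \<le> t" "K \<le> t - T" by simp_all
    have "E t \<le> \<rho> ^ (t - T) * E T + r / 2"
      using decay[of "t - T"] t by simp
    moreover have "\<rho> ^ (t - T) * E T < r / 2"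
      using K[of "t - T"] t by (simp add: abs_less_iff)
    ultimately show "norm (E t - 0) < r"
      using E0[of t] by simp
  qed
qed

section \<open>The spectral norm\<close>

lemma mat_vec_diff: "mat_vec q A u i - mat_vec q A v i = mat_vec q A (\<lambda>j. u j - v j) i"
  by (simp add: mat_vec_def sum_subtractf[symmetric] algebra_simps)

lemma mat_vec_divide: "mat_vec q A (\<lambda>j. v j / r) = (\<lambda>i. mat_vec q A v i / r)"
  by (simp add: mat_vec_def sum_divide_distrib)

lemma abs_mat_vec_le:
  assumes "\<And>j. j < q \<Longrightarrow> \<bar>v j\<bar> \<le> 1"
  shows "\<bar>mat_vec q A v i\<bar> \<le> (\<Sum>j<q. \<bar>A i j\<bar>)"
proof -
  have "\<bar>mat_vec q A v i\<bar> \<le> (\<Sum>j<q. \<bar>A i j * v j\<bar>)"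
    unfolding mat_vec_def by (rule sum_abs)
  also have "\<dots> \<le> (\<Sum>j<q. \<bar>A i j\<bar>)"
    using assms by (intro sum_mono) (auto simp: abs_mult intro: mult_left_le)
  finally show ?thesis .
qed

lemma spec_norm_set_eq:
  "{sqrt (\<Sum>i<p. (mat_vec q A v i)\<^sup>2) | v. (\<Sum>j<q. (v j)\<^sup>2) \<le> 1}
    = {L2_set (mat_vec q A v) {..<p} | v. L2_set v {..<q} \<le> 1}"
  by (simp add: L2_set_def)

lemma bdd_above_spec_norm_set:
  "bdd_above {L2_set (mat_vec q A v) {..<p} | v. L2_set v {..<q} \<le> 1}"
proof (rule bdd_aboveI)
  fix y assume "y \<in> {L2_set (mat_vec q A v) {..<p} | v. L2_set v {..<q} \<le> 1}"
  then obtain v where y: "y = L2_set (mat_vec q A v) {..<p}" and v: "L2_set v {..<q} \<le> 1"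
    by blast
  have "\<bar>v j\<bar> \<le> 1" if "j < q" for j
    using abs_le_L2_set[of "{..<q}" j v] that v by simp
  then show "y \<le> L2_set (\<lambda>i. \<Sum>j<q. \<bar>A i j\<bar>) {..<p}"
    unfolding y by (intro L2_set_mono_abs) (simp add: abs_mat_vec_le)
qed

lemma L2_set_mat_vec_le_spec_norm:
  "L2_set v {..<q} \<le> 1 \<Longrightarrow> L2_set (mat_vec q A v) {..<p} \<le> spec_norm p q A"
  unfolding spec_norm_def spec_norm_set_eq by (rule cSup_upper[OF _ bdd_above_spec_norm_set]) blast

lemma spec_norm_nonneg: "0 \<le> spec_norm p q A"
  using L2_set_mat_vec_le_spec_norm[of "\<lambda>_. 0" q A p] by (simp add: L2_set_def mat_vec_def)

lemma L2_set_mat_vec_le: "L2_set (mat_vec q A v) {..<p} \<le> spec_norm p q A * L2_set v {..<q}"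
proof (cases "L2_set v {..<q} = 0")
  case True
  then have "mat_vec q A v i = 0" for i by (simp add: L2_set_eq_0_iff mat_vec_def)
  then show ?thesis using spec_norm_nonneg[of p q A] by (simp add: L2_set_0')
next
  case False
  define r where "r = L2_set v {..<q}"
  have r: "r > 0" using False L2_set_nonneg[of v "{..<q}"] unfolding r_def by linarith
  have "L2_set (\<lambda>j. v j / r) {..<q} = 1"
    using L2_set_left_distrib[of "1 / r" v "{..<q}"] r by (simp add: r_def)
  then have "L2_set (mat_vec q A (\<lambda>j. v j / r)) {..<p} \<le> spec_norm p q A"
    by (simp add: L2_set_mat_vec_le_spec_norm)
  then have "L2_set (mat_vec q A v) {..<p} / r \<le> spec_norm p q A"
    using L2_set_left_distrib[of "1 / r" "mat_vec q A v" "{..<p}"] r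
    by (simp add: mat_vec_divide)
  then show ?thesis using r by (simp add: r_def divide_le_eq)
qed

lemma L2_dist_mat_vec_le:
  "L2_dist p (mat_vec q A u) (mat_vec q A v) \<le> spec_norm p q A * L2_dist q u v"
  unfolding L2_dist_def mat_vec_diff by (rule L2_set_mat_vec_le)

section \<open>Lipschitz constants of the layer maps\<close>

lemma L2_dist_sigma_affine_le:
  assumes "0 < V"
  shows "L2_dist p (\<lambda>i. sigma (1 / V * (mat_vec q A u i + e i)))
                   (\<lambda>i. sigma (1 / V * (mat_vec q A v i + e i)))
           \<le> spec_norm p q A / V * L2_dist q u v"
proof -
  have "L2_dist p (\<lambda>i. sigma (1 / V * (mat_vec q A u i + e i)))
                  (\<lambda>i. sigma (1 / V * (mat_vec q A v i + e i)))
          \<le> 1 / V * L2_dist p (\<lambda>i. mat_vec q A u i + e i) (\<lambda>i. mat_vec q A v i + e i)"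
    using assms by (intro L2_dist_sigma_le) simp
  also have "\<dots> = 1 / V * L2_dist p (mat_vec q A u) (mat_vec q A v)"
    by (simp add: L2_dist_def)
  also have "\<dots> \<le> 1 / V * (spec_norm p q A * L2_dist q u v)"
    using assms by (intro mult_left_mono L2_dist_mat_vec_le) simp_all
  finally show ?thesis by simp
qed

lemma f_layer_lipschitz:
  "0 < Vth \<Longrightarrow> L2_dist (n l) (f_layer Vth n F b l u) (f_layer Vth n F b l v)
     \<le> spec_norm (n l) (n (l - 1)) (F l) / Vth * L2_dist (n (l - 1)) u v"
  unfolding f_layer_def by (rule L2_dist_sigma_affine_le)

lemma f_first_lipschitz:
  "0 < Vth \<Longrightarrow> L2_dist (n 1) (f_first Vth n m N W F b u x) (f_first Vth n m N W F b v x)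
     \<le> spec_norm (n 1) (n N) W / Vth * L2_dist (n N) u v"
  unfolding f_first_def add.assoc by (rule L2_dist_sigma_affine_le)

lemma f_chain_Suc:
  "1 \<le> l \<Longrightarrow> f_chain Vth n F b (Suc l) a = f_layer Vth n F b (Suc l) (f_chain Vth n F b l a)"
  by (cases l) auto

definition chain_gain :: "real \<Rightarrow> (nat \<Rightarrow> nat) \<Rightarrow> (nat \<Rightarrow> nat \<Rightarrow> nat \<Rightarrow> real) \<Rightarrow> nat \<Rightarrow> real"
  where "chain_gain Vth n F l = (\<Prod>k\<in>{2..l}. spec_norm (n k) (n (k - 1)) (F k) / Vth)"

lemma chain_gain_1 [simp]: "chain_gain Vth n F (Suc 0) = 1"
  by (simp add: chain_gain_def)

lemma chain_gain_Suc:
  assumes "1 \<le> l"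
  shows "chain_gain Vth n F (Suc l) = spec_norm (n (Suc l)) (n l) (F (Suc l)) / Vth * chain_gain Vth n F l"
proof -
  have "{2..Suc l} = insert (Suc l) {2..l}" using assms by auto
  then show ?thesis by (simp add: chain_gain_def)
qed

lemma chain_gain_nonneg: "0 < Vth \<Longrightarrow> 0 \<le> chain_gain Vth n F l"
  unfolding chain_gain_def by (intro prod_nonneg) (simp add: spec_norm_nonneg)

lemma f_chain_lipschitz:
  assumes "0 < Vth" "1 \<le> l"
  shows "L2_dist (n l) (f_chain Vth n F b l u) (f_chain Vth n F b l v)
           \<le> chain_gain Vth n F l * L2_dist (n 1) u v"
  using assms(2)
proof (induction l rule: nat_induct_at_least)
  case base
  then show ?case by simp
next
  case (Suc l)
  have "L2_dist (n (Suc l)) (f_chain Vth n F b (Suc l) u) (f_chain Vth n F b (Suc l) v)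
      \<le> spec_norm (n (Suc l)) (n l) (F (Suc l)) / Vth
          * L2_dist (n l) (f_chain Vth n F b l u) (f_chain Vth n F b l v)"
    using f_layer_lipschitz[OF assms(1), of n "Suc l" F b "f_chain Vth n F b l u" "f_chain Vth n F b l v"]
    by (simp add: f_chain_Suc[OF \<open>1 \<le> l\<close>])
  also have "\<dots> \<le> spec_norm (n (Suc l)) (n l) (F (Suc l)) / Vth
          * (chain_gain Vth n F l * L2_dist (n 1) u v)"
    using assms(1) by (intro mult_left_mono Suc.IH) (simp add: spec_norm_nonneg)
  finally show ?case by (simp add: chain_gain_Suc[OF \<open>1 \<le> l\<close>])
qed

definition loop_gain :: "real \<Rightarrow> (nat \<Rightarrow> nat) \<Rightarrow> nat \<Rightarrow> (nat \<Rightarrow> nat \<Rightarrow> real)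
    \<Rightarrow> (nat \<Rightarrow> nat \<Rightarrow> nat \<Rightarrow> real) \<Rightarrow> real"
  where "loop_gain Vth n N W F = spec_norm (n 1) (n N) W / Vth * chain_gain Vth n F N"

lemma loop_gain_le:
  assumes "0 < Vth" "1 \<le> N"
    and "spec_norm (n 1) (n N) W * (\<Prod>l\<in>{2..N}. spec_norm (n l) (n (l - 1)) (F l)) \<le> \<gamma> * Vth ^ N"
  shows "loop_gain Vth n N W F \<le> \<gamma>"
proof -
  have "Vth * Vth ^ card {2..N} = Vth ^ N"
    using assms(2) by (simp flip: power_Suc)
  then have "loop_gain Vth n N W F
      = spec_norm (n 1) (n N) W * (\<Prod>l\<in>{2..N}. spec_norm (n l) (n (l - 1)) (F l)) / Vth ^ N"
    by (simp add: loop_gain_def chain_gain_def prod_dividef)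
  also have "\<dots> \<le> \<gamma>"
    using assms by (simp add: divide_le_eq)
  finally show ?thesis .
qed

lemma f_first_chain_has_fixpoint:
  assumes Vth: "0 < Vth" and N: "1 \<le> N" and gain: "loop_gain Vth n N W F < 1"
  shows "\<exists>a. \<forall>i<n 1. a i = f_first Vth n m N W F b (f_chain Vth n F b N a) x i"
proof -
  \<comment> \<open>cut off at \<open>n 1\<close> so that \<open>T\<close> maps into the space where \<open>L2_dist (n 1)\<close> is a complete metric\<close>
  define T where
    "T a i = (if i < n 1 then f_first Vth n m N W F b (f_chain Vth n F b N a) x i else 0)" for a i
  have "L2_dist (n 1) (T u) (T v) \<le> loop_gain Vth n N W F * L2_dist (n 1) u v" for u v
  proof -
    have "L2_dist (n 1) (T u) (T v)
        = L2_dist (n 1) (f_first Vth n m N W F b (f_chain Vth n F b N u) x)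
                        (f_first Vth n m N W F b (f_chain Vth n F b N v) x)"
      by (rule L2_dist_cong) (simp_all add: T_def)
    also have "\<dots> \<le> spec_norm (n 1) (n N) W / Vth
        * L2_dist (n N) (f_chain Vth n F b N u) (f_chain Vth n F b N v)"
      by (rule f_first_lipschitz[OF Vth])
    also have "\<dots> \<le> spec_norm (n 1) (n N) W / Vth * (chain_gain Vth n F N * L2_dist (n 1) u v)"
      using Vth by (intro mult_left_mono f_chain_lipschitz N) (simp_all add: spec_norm_nonneg)
    finally show ?thesis by (simp add: loop_gain_def)
  qed
  moreover have "T u j = 0" if "n 1 \<le> j" for u j
    using that by (simp add: T_def)
  ultimately obtain a where "T a = a"
    using L2_dist_contraction_has_fixpoint[OF gain] by blast
  then show ?thesis
    by (metis T_def)
qed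

section \<open>Convergence of the average firing rates\<close>

text \<open>
  The argument uses the spiking and membrane equations only through the rate relations
  \<open>rel1\<close> and \<open>rell\<close>, which the theorem assumes directly.
\<close>

locale rate_network =
  fixes Vth c :: real and N m :: nat and n :: "nat \<Rightarrow> nat"
    and W :: "nat \<Rightarrow> nat \<Rightarrow> real" and F :: "nat \<Rightarrow> nat \<Rightarrow> nat \<Rightarrow> real"
    and b :: "nat \<Rightarrow> nat \<Rightarrow> real" and x :: "nat \<Rightarrow> nat \<Rightarrow> real"
    and s up :: "nat \<Rightarrow> nat \<Rightarrow> nat \<Rightarrow> real" and xstar :: "nat \<Rightarrow> real"
  assumes Vth_pos: "0 < Vth" and N_pos: "1 \<le> N"
    and rel1: "\<And>t i. i < n 1 \<Longrightarrow>
        avg_rate s 1 (t + 1) i = sigma ((1 / Vth) *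
          (real t / real (t + 1) * mat_vec (n N) W (avg_rate s N t) i
           + mat_vec m (F 1) (avg_input x t) i + b 1 i - up 1 i (t + 1) / real (t + 1)))"
    and rell: "\<And>t l i. 1 \<le> l \<Longrightarrow> l \<le> N - 1 \<Longrightarrow> i < n (l + 1) \<Longrightarrow>
        avg_rate s (l + 1) (t + 1) i = sigma ((1 / Vth) *
          (mat_vec (n l) (F (l + 1)) (avg_rate s l (t + 1)) i + b (l + 1) i
           - up (l + 1) i (t + 1) / real (t + 1)))"
    and xconv: "\<And>j. j < m \<Longrightarrow> (\<lambda>t. avg_input x t j) \<longlonglongrightarrow> xstar j"
    and ubound: "\<And>l i t. 1 \<le> l \<Longrightarrow> l \<le> N \<Longrightarrow> i < n l \<Longrightarrow> \<bar>up l i t\<bar> \<le> c"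
begin

lemma avg_rate_bounds:
  assumes "1 \<le> l" "l \<le> N" "i < n l"
  shows "0 \<le> avg_rate s l t i \<and> avg_rate s l t i \<le> 1"
proof (cases t)
  case 0
  \<comment> \<open>\<open>avg_rate s l 0 = 0\<close> because \<open>1 / 0 = 0\<close>\<close>
  then show ?thesis by (simp add: avg_rate_def)
next
  case (Suc t')
  show ?thesis
  proof (cases "l = 1")
    case True
    then show ?thesis using rel1[of i t'] assms Suc by (simp add: sigma_bounds)
  next
    case False
    then obtain l' where "l = Suc l'" "1 \<le> l'" using assms by (cases l) auto
    then show ?thesis using rell[of l' i t'] assms Suc by (simp add: sigma_bounds)
  qed
qed

lemma L2_set_up_le:
  assumes "1 \<le> l" "l \<le> N"
  shows "L2_set (\<lambda>i. up l i (t + 1) / real (t + 1)) {..<n l} \<le> real (n l) * \<bar>c\<bar> / (real t + 1)"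
proof -
  have "L2_set (\<lambda>i. up l i (t + 1) / real (t + 1)) {..<n l} \<le> real (n l) * (\<bar>c\<bar> / (real t + 1))"
  proof (rule L2_set_lessThan_le)
    fix i assume "i < n l"
    then show "\<bar>up l i (t + 1) / real (t + 1)\<bar> \<le> \<bar>c\<bar> / (real t + 1)"
      using ubound[OF assms, of i "t + 1"] by (simp add: divide_right_mono add.commute)
  qed
  then show ?thesis by simp
qed

lemma avg_rate_f_layer_dist_le:
  assumes "1 \<le> l" "l \<le> N - 1"
  shows "L2_dist (n (l + 1)) (avg_rate s (l + 1) (t + 1)) (f_layer Vth n F b (l + 1) (avg_rate s l (t + 1)))
           \<le> real (n (l + 1)) * \<bar>c\<bar> / (Vth * (real t + 1))"
proof -
  define X where "X i = mat_vec (n l) (F (l + 1)) (avg_rate s l (t + 1)) i + b (l + 1) i" for i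
  have "L2_dist (n (l + 1)) (avg_rate s (l + 1) (t + 1)) (f_layer Vth n F b (l + 1) (avg_rate s l (t + 1)))
      = L2_dist (n (l + 1)) (\<lambda>i. sigma (1 / Vth * (X i - up (l + 1) i (t + 1) / real (t + 1))))
                            (\<lambda>i. sigma (1 / Vth * X i))"
    using rell[OF assms] by (intro L2_dist_cong) (simp_all add: X_def f_layer_def diff_add_eq)
  also have "\<dots> \<le> 1 / Vth * L2_set (\<lambda>i. up (l + 1) i (t + 1) / real (t + 1)) {..<n (l + 1)}"
    using Vth_pos by (intro L2_dist_sigma_perturb_le) simp
  also have "\<dots> \<le> 1 / Vth * (real (n (l + 1)) * \<bar>c\<bar> / (real t + 1))"
    using Vth_pos assms by (intro mult_left_mono L2_set_up_le) simp_all
  finally show ?thesis by simp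
qed

lemma L2_set_mat_vec_avg_rate_le:
  "L2_set (mat_vec (n N) W (avg_rate s N t)) {..<n 1} \<le> spec_norm (n 1) (n N) W * real (n N)"
proof -
  have "L2_set (avg_rate s N t) {..<n N} \<le> real (n N) * 1"
    using avg_rate_bounds[OF N_pos order_refl] by (intro L2_set_lessThan_le) auto
  then show ?thesis
    by (intro order.trans[OF L2_set_mat_vec_le] mult_left_mono spec_norm_nonneg) simp_all
qed

lemma avg_rate_f_first_dist_le:
  "L2_dist (n 1) (avg_rate s 1 (t + 1)) (f_first Vth n m N W F b (avg_rate s N t) xstar)
     \<le> (spec_norm (n 1) (n N) W * real (n N) / (real t + 1)
        + L2_dist (n 1) (mat_vec m (F 1) xstar) (mat_vec m (F 1) (avg_input x t))
        + real (n 1) * \<bar>c\<bar> / (real t + 1)) / Vth"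
proof -
  define X where "X i = mat_vec (n N) W (avg_rate s N t) i + mat_vec m (F 1) xstar i + b 1 i" for i
  \<comment> \<open>\<open>t/(t+1) = 1 - 1/(t+1)\<close>: the defect enters the perturbation \<open>w\<close> and is \<open>O(1/t)\<close> as rates lie in \<open>[0,1]\<close>\<close>
  define w where "w i = mat_vec (n N) W (avg_rate s N t) i / (real t + 1)
      + (mat_vec m (F 1) xstar i - mat_vec m (F 1) (avg_input x t) i) + up 1 i (t + 1) / real (t + 1)"
    for i
  have arg_eq: "X i - w i = real t / real (t + 1) * mat_vec (n N) W (avg_rate s N t) i
      + mat_vec m (F 1) (avg_input x t) i + b 1 i - up 1 i (t + 1) / real (t + 1)" for i
    by (simp add: X_def w_def field_simps add_pos_nonneg[THEN less_imp_neq, symmetric])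
  have "avg_rate s 1 (t + 1) i = sigma (1 / Vth * (X i - w i))" if "i < n 1" for i
    unfolding arg_eq using rel1[OF that] .
  then have "L2_dist (n 1) (avg_rate s 1 (t + 1)) (f_first Vth n m N W F b (avg_rate s N t) xstar)
      = L2_dist (n 1) (\<lambda>i. sigma (1 / Vth * (X i - w i))) (\<lambda>i. sigma (1 / Vth * X i))"
    by (intro L2_dist_cong) (simp_all add: X_def f_first_def)
  also have "\<dots> \<le> 1 / Vth * L2_set w {..<n 1}"
    using Vth_pos by (intro L2_dist_sigma_perturb_le) simp
  also have "L2_set w {..<n 1}
      \<le> L2_set (\<lambda>i. mat_vec (n N) W (avg_rate s N t) i / (real t + 1)) {..<n 1}
        + L2_dist (n 1) (mat_vec m (F 1) xstar) (mat_vec m (F 1) (avg_input x t))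
        + L2_set (\<lambda>i. up 1 i (t + 1) / real (t + 1)) {..<n 1}"
    unfolding w_def L2_dist_def
    by (intro order.trans[OF L2_set_triangle_ineq] add_mono L2_set_triangle_ineq order_refl)
  also have "\<dots> \<le> spec_norm (n 1) (n N) W * real (n N) / (real t + 1)
        + L2_dist (n 1) (mat_vec m (F 1) xstar) (mat_vec m (F 1) (avg_input x t))
        + real (n 1) * \<bar>c\<bar> / (real t + 1)"
  proof (intro add_mono order_refl L2_set_up_le N_pos)
    have "L2_set (mat_vec (n N) W (avg_rate s N t)) {..<n 1} / (real t + 1)
        \<le> spec_norm (n 1) (n N) W * real (n N) / (real t + 1)"
      by (intro divide_right_mono L2_set_mat_vec_avg_rate_le) simp
    then show "L2_set (\<lambda>i. mat_vec (n N) W (avg_rate s N t) i / (real t + 1)) {..<n 1}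
        \<le> spec_norm (n 1) (n N) W * real (n N) / (real t + 1)"
      using L2_set_left_distrib[of "1 / (real t + 1)" "mat_vec (n N) W (avg_rate s N t)" "{..<n 1}"]
      by simp
  qed
  finally show ?thesis
    using Vth_pos by (simp add: divide_right_mono)
qed

lemma avg_rate_f_first_dist_le_null:
  "\<exists>D. D \<longlonglongrightarrow> 0 \<and>
     (\<forall>t. L2_dist (n 1) (avg_rate s 1 (t + 1)) (f_first Vth n m N W F b (avg_rate s N t) xstar) \<le> D t)"
proof -
  define D where "D = (\<lambda>t. (spec_norm (n 1) (n N) W * real (n N) / (real t + 1)
      + L2_dist (n 1) (mat_vec m (F 1) xstar) (mat_vec m (F 1) (avg_input x t))
      + real (n 1) * \<bar>c\<bar> / (real t + 1)) / Vth)"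
  have "(\<lambda>t. mat_vec m (F 1) (avg_input x t) i) \<longlonglongrightarrow> mat_vec m (F 1) xstar i" for i
    unfolding mat_vec_def by (intro tendsto_intros xconv) simp
  then have "(\<lambda>t. L2_dist (n 1) (mat_vec m (F 1) xstar) (mat_vec m (F 1) (avg_input x t))) \<longlonglongrightarrow> 0"
    unfolding L2_dist_commute[of _ "mat_vec m (F 1) xstar"] by (simp add: L2_dist_tendsto_0_iff)
  then have "D \<longlonglongrightarrow> (0 + 0 + 0) / Vth"
    unfolding D_def by (intro tendsto_intros inverse_Suc_LIMSEQ_0) (use Vth_pos in simp_all)
  moreover have "L2_dist (n 1) (avg_rate s 1 (t + 1)) (f_first Vth n m N W F b (avg_rate s N t) xstar)
      \<le> D t" for t
    unfolding D_def by (rule avg_rate_f_first_dist_le)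
  ultimately show ?thesis by auto
qed

lemma avg_rate_f_chain_dist_le:
  assumes "1 \<le> l" "l \<le> N"
  shows "\<exists>R. R \<longlonglongrightarrow> 0 \<and>
    (\<forall>t. L2_dist (n l) (avg_rate s l (t + 1)) (f_chain Vth n F b l a)
          \<le> chain_gain Vth n F l * L2_dist (n 1) (avg_rate s 1 (t + 1)) a + R t)"
  using assms
proof (induction l rule: nat_induct_at_least)
  case base
  then show ?case by (intro exI[of _ "\<lambda>_. 0"]) simp
next
  case (Suc l)
  then obtain R where R: "R \<longlonglongrightarrow> 0" and dist_l: "\<And>t.
      L2_dist (n l) (avg_rate s l (t + 1)) (f_chain Vth n F b l a)
        \<le> chain_gain Vth n F l * L2_dist (n 1) (avg_rate s 1 (t + 1)) a + R t"
    by auto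
  define g where "g = spec_norm (n (Suc l)) (n l) (F (Suc l)) / Vth"
  define R' where "R' = (\<lambda>t. real (n (Suc l)) * \<bar>c\<bar> / Vth / (real t + 1) + g * R t)"
  have g: "0 \<le> g" using Vth_pos by (simp add: g_def spec_norm_nonneg)
  have "R' \<longlonglongrightarrow> 0 + g * 0"
    unfolding R'_def by (intro tendsto_intros inverse_Suc_LIMSEQ_0 R)
  moreover have "L2_dist (n (Suc l)) (avg_rate s (Suc l) (t + 1)) (f_chain Vth n F b (Suc l) a)
      \<le> chain_gain Vth n F (Suc l) * L2_dist (n 1) (avg_rate s 1 (t + 1)) a + R' t" for t
  proof -
    let ?a = "avg_rate s l (t + 1)"
    have "L2_dist (n (Suc l)) (avg_rate s (Suc l) (t + 1)) (f_chain Vth n F b (Suc l) a)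
        \<le> L2_dist (n (Suc l)) (avg_rate s (Suc l) (t + 1)) (f_layer Vth n F b (Suc l) ?a)
          + L2_dist (n (Suc l)) (f_layer Vth n F b (Suc l) ?a)
              (f_layer Vth n F b (Suc l) (f_chain Vth n F b l a))"
      by (simp add: f_chain_Suc[OF \<open>1 \<le> l\<close>] L2_dist_triangle)
    also have "\<dots> \<le> real (n (Suc l)) * \<bar>c\<bar> / Vth / (real t + 1)
        + g * L2_dist (n l) ?a (f_chain Vth n F b l a)"
      using avg_rate_f_layer_dist_le[of l t] f_layer_lipschitz[OF Vth_pos, of n "Suc l" F b] Suc
      by (intro add_mono) (simp_all add: g_def)
    also have "\<dots> \<le> real (n (Suc l)) * \<bar>c\<bar> / Vth / (real t + 1)
        + g * (chain_gain Vth n F l * L2_dist (n 1) (avg_rate s 1 (t + 1)) a + R t)"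
      by (intro add_left_mono mult_left_mono dist_l g)
    also have "\<dots> = chain_gain Vth n F (Suc l) * L2_dist (n 1) (avg_rate s 1 (t + 1)) a + R' t"
      by (simp add: R'_def g_def chain_gain_Suc[OF \<open>1 \<le> l\<close>] algebra_simps)
    finally show ?thesis .
  qed
  ultimately show ?case by auto
qed

lemma avg_rate_first_layer_recurrence:
  assumes fixp: "\<And>i. i < n 1 \<Longrightarrow> a i = f_first Vth n m N W F b (f_chain Vth n F b N a) xstar i"
  shows "\<exists>D. D \<longlonglongrightarrow> 0 \<and> (\<forall>t. L2_dist (n 1) (avg_rate s 1 (Suc t + 1)) a
           \<le> loop_gain Vth n N W F * L2_dist (n 1) (avg_rate s 1 (t + 1)) a + D t)"
proof -
  obtain D where D: "D \<longlonglongrightarrow> 0" "\<And>t. L2_dist (n 1) (avg_rate s 1 (t + 1))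
      (f_first Vth n m N W F b (avg_rate s N t) xstar) \<le> D t"
    using avg_rate_f_first_dist_le_null by blast
  obtain R where R: "R \<longlonglongrightarrow> 0" "\<And>t. L2_dist (n N) (avg_rate s N (t + 1)) (f_chain Vth n F b N a)
      \<le> chain_gain Vth n F N * L2_dist (n 1) (avg_rate s 1 (t + 1)) a + R t"
    using avg_rate_f_chain_dist_le[OF N_pos order_refl, of a] by blast
  define g where "g = spec_norm (n 1) (n N) W / Vth"
  have "(\<lambda>t. D (Suc t) + g * R t) \<longlonglongrightarrow> 0 + g * 0"
    by (intro tendsto_intros R(1) LIMSEQ_Suc[OF D(1)])
  moreover have "L2_dist (n 1) (avg_rate s 1 (Suc t + 1)) a
      \<le> loop_gain Vth n N W F * L2_dist (n 1) (avg_rate s 1 (t + 1)) a + (D (Suc t) + g * R t)" for t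
  proof -
    have "L2_dist (n 1) (avg_rate s 1 (Suc t + 1)) a
        = L2_dist (n 1) (avg_rate s 1 (Suc t + 1)) (f_first Vth n m N W F b (f_chain Vth n F b N a) xstar)"
      by (intro L2_dist_cong refl fixp)
    also have "\<dots> \<le> L2_dist (n 1) (avg_rate s 1 (Suc t + 1))
          (f_first Vth n m N W F b (avg_rate s N (Suc t)) xstar)
        + L2_dist (n 1) (f_first Vth n m N W F b (avg_rate s N (Suc t)) xstar)
          (f_first Vth n m N W F b (f_chain Vth n F b N a) xstar)"
      by (rule L2_dist_triangle)
    also have "\<dots> \<le> D (Suc t) + g * L2_dist (n N) (avg_rate s N (t + 1)) (f_chain Vth n F b N a)"
      using D(2)[of "Suc t"] f_first_lipschitz[OF Vth_pos] by (intro add_mono) (simp_all add: g_def)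
    also have "\<dots> \<le> D (Suc t) + g * (chain_gain Vth n F N * L2_dist (n 1) (avg_rate s 1 (t + 1)) a + R t)"
      using Vth_pos by (intro add_left_mono mult_left_mono R(2)) (simp add: g_def spec_norm_nonneg)
    also have "\<dots> = loop_gain Vth n N W F * L2_dist (n 1) (avg_rate s 1 (t + 1)) a + (D (Suc t) + g * R t)"
      by (simp add: loop_gain_def g_def algebra_simps)
    finally show ?thesis .
  qed
  ultimately show ?thesis by (intro exI[of _ "\<lambda>t. D (Suc t) + g * R t"]) simp
qed

lemma avg_rate_first_layer_LIMSEQ:
  assumes gain: "loop_gain Vth n N W F < 1"
    and fixp: "\<And>i. i < n 1 \<Longrightarrow> a i = f_first Vth n m N W F b (f_chain Vth n F b N a) xstar i"
  shows "(\<lambda>t. L2_dist (n 1) (avg_rate s 1 (t + 1)) a) \<longlonglongrightarrow> 0"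
proof -
  obtain D where "D \<longlonglongrightarrow> 0" "\<And>t. L2_dist (n 1) (avg_rate s 1 (Suc t + 1)) a
      \<le> loop_gain Vth n N W F * L2_dist (n 1) (avg_rate s 1 (t + 1)) a + D t"
    using avg_rate_first_layer_recurrence[OF fixp] by blast
  moreover have "0 \<le> loop_gain Vth n N W F"
    using Vth_pos by (simp add: loop_gain_def spec_norm_nonneg chain_gain_nonneg)
  ultimately show ?thesis
    using gain
    by (intro contracting_recurrence_LIMSEQ_0[where E = "\<lambda>t. L2_dist (n 1) (avg_rate s 1 (t + 1)) a"])
      (simp_all add: L2_dist_nonneg)
qed

lemma avg_rate_LIMSEQ_f_chain:
  assumes gain: "loop_gain Vth n N W F < 1"
    and fixp: "\<And>i. i < n 1 \<Longrightarrow> a i = f_first Vth n m N W F b (f_chain Vth n F b N a) xstar i"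
    and l: "1 \<le> l" "l \<le> N" and i: "i < n l"
  shows "(\<lambda>t. avg_rate s l t i) \<longlonglongrightarrow> f_chain Vth n F b l a i"
proof -
  obtain R where R: "R \<longlonglongrightarrow> 0" "\<And>t. L2_dist (n l) (avg_rate s l (t + 1)) (f_chain Vth n F b l a)
      \<le> chain_gain Vth n F l * L2_dist (n 1) (avg_rate s 1 (t + 1)) a + R t"
    using avg_rate_f_chain_dist_le[OF l, of a] by blast
  have "(\<lambda>t. chain_gain Vth n F l * L2_dist (n 1) (avg_rate s 1 (t + 1)) a + R t)
      \<longlonglongrightarrow> chain_gain Vth n F l * 0 + 0"
    by (intro tendsto_intros avg_rate_first_layer_LIMSEQ[OF gain fixp] R(1))
  then have upper: "(\<lambda>t. chain_gain Vth n F l * L2_dist (n 1) (avg_rate s 1 (t + 1)) a + R t)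
      \<longlonglongrightarrow> 0"
    by simp
  have "(\<lambda>t. L2_dist (n l) (avg_rate s l (t + 1)) (f_chain Vth n F b l a)) \<longlonglongrightarrow> 0"
    using R(2)
    by (intro Lim_null_comparison[OF always_eventually upper]) (simp add: L2_dist_nonneg abs_of_nonneg)
  then have "(\<lambda>t. avg_rate s l (t + 1) i) \<longlonglongrightarrow> f_chain Vth n F b l a i"
    using i by (simp only: L2_dist_tendsto_0_iff)
  then have "(\<lambda>t. avg_rate s l (Suc t) i) \<longlonglongrightarrow> f_chain Vth n F b l a i"
    by simp
  then show ?thesis by (rule LIMSEQ_imp_Suc)
qed

end

theorem theorem3:
  fixes N m :: nat and n :: "nat \<Rightarrow> nat" and Vth c \<gamma> :: real
    and W :: "nat \<Rightarrow> nat \<Rightarrow> real"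
    and F :: "nat \<Rightarrow> nat \<Rightarrow> nat \<Rightarrow> real"
    and b :: "nat \<Rightarrow> nat \<Rightarrow> real"
    and x :: "nat \<Rightarrow> nat \<Rightarrow> real"
    and u s up :: "nat \<Rightarrow> nat \<Rightarrow> nat \<Rightarrow> real"
    and xstar :: "nat \<Rightarrow> real"
  assumes N2: "N \<ge> 2" and Vth: "Vth > 0"
    and u0: "\<And>l i. u l i 0 = 0" and s0: "\<And>l i. s l i 0 = 0"
    and spike1: "\<And>t i. i < n 1 \<Longrightarrow>
        s 1 i (t + 1) = heaviside (u 1 i t + mat_vec (n N) W (\<lambda>j. s N j t) i
           + mat_vec m (F 1) (x t) i + b 1 i - Vth)"
    and mem1: "\<And>t i. i < n 1 \<Longrightarrow>
        u 1 i (t + 1) = u 1 i t + mat_vec (n N) W (\<lambda>j. s N j t) i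
           + mat_vec m (F 1) (x t) i + b 1 i - Vth * s 1 i (t + 1)"
    and spikel: "\<And>t l i. 1 \<le> l \<Longrightarrow> l \<le> N - 1 \<Longrightarrow> i < n (l + 1) \<Longrightarrow>
        s (l + 1) i (t + 1) = heaviside (u (l + 1) i t
           + mat_vec (n l) (F (l + 1)) (\<lambda>j. s l j (t + 1)) i + b (l + 1) i - Vth)"
    and meml: "\<And>t l i. 1 \<le> l \<Longrightarrow> l \<le> N - 1 \<Longrightarrow> i < n (l + 1) \<Longrightarrow>
        u (l + 1) i (t + 1) = u (l + 1) i t
           + mat_vec (n l) (F (l + 1)) (\<lambda>j. s l j (t + 1)) i + b (l + 1) i
           - Vth * s (l + 1) i (t + 1)"
    and rel1: "\<And>t i. i < n 1 \<Longrightarrow>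
        avg_rate s 1 (t + 1) i = sigma ((1 / Vth) *
          (real t / real (t + 1) * mat_vec (n N) W (avg_rate s N t) i
           + mat_vec m (F 1) (avg_input x t) i + b 1 i - up 1 i (t + 1) / real (t + 1)))"
    and rell: "\<And>t l i. 1 \<le> l \<Longrightarrow> l \<le> N - 1 \<Longrightarrow> i < n (l + 1) \<Longrightarrow>
        avg_rate s (l + 1) (t + 1) i = sigma ((1 / Vth) *
          (mat_vec (n l) (F (l + 1)) (avg_rate s l (t + 1)) i + b (l + 1) i
           - up (l + 1) i (t + 1) / real (t + 1)))"
    and xconv: "\<And>j. j < m \<Longrightarrow> (\<lambda>t. avg_input x t j) \<longlonglongrightarrow> xstar j"
    and ubound: "\<And>l i t. 1 \<le> l \<Longrightarrow> l \<le> N \<Longrightarrow> i < n l \<Longrightarrow> \<bar>up l i t\<bar> \<le> c"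
    and gamma1: "\<gamma> < 1"
    and normbound: "spec_norm (n 1) (n N) W * (\<Prod>l\<in>{2..N}. spec_norm (n l) (n (l - 1)) (F l))
                      \<le> \<gamma> * Vth ^ N"
  shows "\<exists>astar :: nat \<Rightarrow> nat \<Rightarrow> real.
     (\<forall>i < n 1. astar 1 i = f_first Vth n m N W F b (f_chain Vth n F b N (astar 1)) xstar i)
   \<and> (\<forall>l. 1 \<le> l \<and> l \<le> N - 1 \<longrightarrow>
        (\<forall>i < n (l + 1). astar (l + 1) i = f_layer Vth n F b (l + 1) (astar l) i))
   \<and> (\<forall>l. 1 \<le> l \<and> l \<le> N \<longrightarrow>
        (\<forall>i < n l. (\<lambda>t. avg_rate s l t i) \<longlonglongrightarrow> astar l i))"
proof -
  interpret rate_network Vth c N m n W F b x s up xstar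
    using N2 Vth rel1 rell xconv ubound by unfold_locales auto
  have gain: "loop_gain Vth n N W F < 1"
    using loop_gain_le[OF Vth _ normbound] N2 gamma1 by simp
  obtain a where fixp: "\<And>i. i < n 1 \<Longrightarrow> a i = f_first Vth n m N W F b (f_chain Vth n F b N a) xstar i"
    using f_first_chain_has_fixpoint[OF Vth _ gain] N2 by force
  show ?thesis
  proof (intro exI[of _ "\<lambda>l. f_chain Vth n F b l a"] conjI allI impI)
    fix i assume "i < n 1"
    then show "f_chain Vth n F b 1 a i
        = f_first Vth n m N W F b (f_chain Vth n F b N (f_chain Vth n F b 1 a)) xstar i"
      using fixp by simp
  next
    fix l i assume "1 \<le> l \<and> l \<le> N - 1"
    then show "f_chain Vth n F b (l + 1) a i = f_layer Vth n F b (l + 1) (f_chain Vth n F b l a) i"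
      by (simp add: f_chain_Suc)
  next
    fix l i assume "1 \<le> l \<and> l \<le> N" "i < n l"
    then show "(\<lambda>t. avg_rate s l t i) \<longlonglongrightarrow> f_chain Vth n F b l a i"
      using avg_rate_LIMSEQ_f_chain[OF gain fixp] by blast
  qed
qed

end
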